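(* Let $P$ be a simple $d$-polytope. (1) If $v$ is a vertex of $P$ then the interval $[P,v]=\{f\in\mathscr F(P): P\le f\le v\}$ is a Boolean lattice of rank $d$; in particular, facets $f_1,\dots,f_k$ with $\bigvee f_i<\varnothing$ are independent. (2) If $P$ is the $d$-cube or the $d$-permutohedron and $f_1,\dots,f_k\in\mathscr F(P)$ are independent facets with $\bigvee f_i=\varnothing$, then $k\le2$.
   Context: $\mathscr F(P)$ is the set of faces of the convex polytope $P$ (including $P$ and $\varnothing$) ordered by reverse inclusion, so $f_1\vee f_2=f_1\cap f_2$, the least element is $P$ and the greatest is $\varnothing$; the atoms are the facets. A $d$-polytope is simple if every vertex lies in exactly $d$ facets. A set $S$ of facets is independent if $\bigvee(S\setminus\{s\})<\bigvee S$ (i.e. $\bigcap(S\setminus\{s\})\supsetneq\bigcap S$) for every $s\in S$. The $d$-cube is the convex hull of $\{\sum_i\varepsilon_iv_i:\varepsilon_i=\pm1\}\subset\mathbb R^d$; the $d$-permutohedron is the convex hull of $\{\sum_i m_{i\pi}v_i:\pi\in\mathfrak S_{d+1}\}\subset\mathbb R^{d+1}$ for fixed integers $0\le m_1<\dots<m_{d+1}$. The Boolean lattice of rank $d$ is the lattice of subsets of a $d$-set. *)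

theory Defs
  imports "HOL-Analysis.Analysis"
begin

text \<open>Face lattice F(P) ordered by reverse inclusion: the join of a set S of faces
  is their intersection (taken inside P, so that the empty join is P, the least element).\<close>
definition face_join :: "'a::euclidean_space set \<Rightarrow> 'a set set \<Rightarrow> 'a set" where
  "face_join P S = P \<inter> \<Inter>S"

definition independent_facets :: "'a::euclidean_space set \<Rightarrow> 'a set set \<Rightarrow> bool" where
  "independent_facets P S \<longleftrightarrow>
     (\<forall>F\<in>S. F facet_of P) \<and> (\<forall>s\<in>S. face_join P S \<subset> face_join P (S - {s}))"

definition simple_polytope :: "nat \<Rightarrow> 'a::euclidean_space set \<Rightarrow> bool" where
  "simple_polytope d P \<longleftrightarrow> polytope P \<and> aff_dim P = int d \<and>
     (\<forall>v. {v} face_of P \<longrightarrow> card {F. F facet_of P \<and> v \<in> F} = d)"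

text \<open>The interval [P, v] of the face lattice: faces f with P \<le> f \<le> {v}, i.e. faces containing v.\<close>
definition face_interval :: "'a::euclidean_space set \<Rightarrow> 'a \<Rightarrow> 'a set set" where
  "face_interval P v = {F. F face_of P \<and> {v} \<subseteq> F}"

definition boolean_lattice_of_rank :: "'a set set \<Rightarrow> nat \<Rightarrow> bool" where
  "boolean_lattice_of_rank L d \<longleftrightarrow>
     (\<exists>(A::nat set) \<phi>. finite A \<and> card A = d \<and> bij_betw \<phi> L (Pow A) \<and>
        (\<forall>F\<in>L. \<forall>G\<in>L. G \<subseteq> F \<longleftrightarrow> \<phi> F \<subseteq> \<phi> G))"

text \<open>The d-cube in R^d, d = CARD('n), v_i the standard basis vectors.\<close>
definition cube :: "(real^'n) set" where
  "cube = convex hull {(\<Sum>i\<in>UNIV. \<epsilon> i *\<^sub>R axis i 1) | \<epsilon>. \<forall>i. \<epsilon> i = 1 \<or> \<epsilon> i = -1}"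

text \<open>The permutohedron in R^(d+1), d + 1 = CARD('n), for a labelling m of the
  d+1 distinct nonnegative integers m_1 < ... < m_(d+1) by the coordinates.\<close>
definition permutohedron :: "('n \<Rightarrow> int) \<Rightarrow> (real^'n) set" where
  "permutohedron m = convex hull
     {(\<Sum>i\<in>UNIV. of_int (m (\<pi> i)) *\<^sub>R axis i 1) | \<pi>. \<pi> permutes (UNIV :: 'n set)}"

end

theory Submission
  imports Defs
begin

text \<open>Write \<open>P\<close> as the intersection of its affine hull with an irredundant family of
  halfspaces. Facets then correspond bijectively to halfspaces, and the facets through a vertex
  \<open>v\<close> to the constraints tight at \<open>v\<close>. If \<open>P\<close> is simple there are exactly \<open>dim P\<close> of them, so their
  hyperplanes cut the affine hull down to \<open>{v}\<close>, and releasing any single one of them leaves a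
  line through \<open>v\<close> along which one can step into \<open>P\<close>, off that facet but still on all the others.
  Hence every set \<open>T\<close> of facets through \<open>v\<close> is recovered as the set of facets containing the face
  \<open>P \<inter> \<Inter>T\<close>; this gives the Boolean interval and the independence statement.

  If at least three facets are independent, any two of them share a vertex, since dropping a third
  facet leaves a nonempty face. The vertices on a facet are the maximizers of a linear functional
  over the vertex set, and for the cube and the permutohedron pairwise intersecting maximizer sets
  have a common point: on the cube two functionals sharing a maximizer never prescribe opposite
  signs in a coordinate, and on the permutohedron a permutation maximizing the sum of the
  functionals orders the coordinates compatibly with each of them. That common vertex lies in the
  join, so an empty join forces at most two facets.\<close>

section \<open>Irredundant halfspace representations\<close>

lemma aff_dim_Int_hyperplanes_ge:
  fixes S :: "'a::euclidean_space set"
  assumes "affine S" "finite T" "v \<in> S" "\<And>h. h \<in> T \<Longrightarrow> a h \<bullet> v = b h"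
  shows "aff_dim S - int (card T) \<le> aff_dim (S \<inter> \<Inter>((\<lambda>h. {x. a h \<bullet> x = b h}) ` T))"
  using assms(2,4)
proof (induction T rule: finite_induct)
  case empty
  then show ?case by simp
next
  case (insert h T)
  let ?M = "S \<inter> \<Inter>((\<lambda>h. {x. a h \<bullet> x = b h}) ` T)"
  have "affine ?M"
    by (intro affine_Int \<open>affine S\<close> affine_Inter) (auto intro: affine_hyperplane)
  moreover have "v \<in> ?M \<inter> {x. a h \<bullet> x = b h}"
    using assms(3) insert.prems by auto
  ultimately have "aff_dim ?M - 1 \<le> aff_dim (?M \<inter> {x. a h \<bullet> x = b h})"
    by (subst aff_dim_affine_Int_hyperplane) auto
  moreover have "S \<inter> \<Inter>((\<lambda>h. {x. a h \<bullet> x = b h}) ` insert h T) = ?M \<inter> {x. a h \<bullet> x = b h}"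
    by auto
  ultimately show ?case
    using insert by simp
qed

lemma inner_combination:
  "c \<bullet> ((1 - t) *\<^sub>R y + t *\<^sub>R x) = (1 - t) * (c \<bullet> y) + t * (c \<bullet> x)"
  by (simp add: inner_add_right)

locale minimal_halfspace_representation =
  fixes P :: "'a::euclidean_space set" and H :: "'a set set"
    and a :: "'a set \<Rightarrow> 'a" and b :: "'a set \<Rightarrow> real"
  assumes finite_H: "finite H"
    and P_eq: "P = affine hull P \<inter> \<Inter>H"
    and halfspace: "\<And>h. h \<in> H \<Longrightarrow> a h \<noteq> 0 \<and> h = {x. a h \<bullet> x \<le> b h}"
    and minimal: "\<And>H'. H' \<subset> H \<Longrightarrow> P \<subset> affine hull P \<inter> \<Inter>H'"
begin

definition facet :: "'a set \<Rightarrow> 'a set" where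
  "facet h = P \<inter> {x. a h \<bullet> x = b h}"

definition tight :: "'a \<Rightarrow> 'a set set" where
  "tight v = {h \<in> H. a h \<bullet> v = b h}"

lemma mem_iff: "x \<in> P \<longleftrightarrow> x \<in> affine hull P \<and> (\<forall>h\<in>H. a h \<bullet> x \<le> b h)"
proof -
  have "\<Inter>H = {x. \<forall>h\<in>H. a h \<bullet> x \<le> b h}"
    using halfspace by auto
  then show ?thesis
    using P_eq by blast
qed

lemma polyhedron: "polyhedron P"
  unfolding polyhedron_Int_affine using finite_H P_eq halfspace by metis

lemma facet_of_iff: "F facet_of P \<longleftrightarrow> (\<exists>h\<in>H. F = facet h)"
  unfolding facet_def using facet_of_polyhedron_explicit[OF finite_H P_eq halfspace minimal] by blast

lemma inj_on_facet: "inj_on facet H"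
proof (rule inj_onI, rule ccontr)
  fix h1 h2
  assume h1: "h1 \<in> H" and h2: "h2 \<in> H" and eq: "facet h1 = facet h2" and "h1 \<noteq> h2"
  obtain x where x: "x \<in> affine hull P" "x \<in> \<Inter>(H - {h1})" "x \<notin> P"
    using minimal[of "H - {h1}"] h1 by blast
  have x_h: "a h \<bullet> x \<le> b h" if "h \<in> H - {h1}" for h
    using x(2) that halfspace by blast
  with x have x_h1: "b h1 < a h1 \<bullet> x"
    using mem_iff by force
  have "rel_interior P \<noteq> {}"
    using x(1) polyhedron by (auto simp: rel_interior_eq_empty polyhedron_imp_convex)
  then obtain y where "y \<in> rel_interior P"
    by blast
  then have y: "y \<in> P" "\<And>h. h \<in> H \<Longrightarrow> a h \<bullet> y < b h"
    using rel_interior_polyhedron_explicit[OF finite_H P_eq halfspace minimal] by auto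
  \<comment> \<open>Walk from the relative interior point \<open>y\<close> towards \<open>x\<close> until \<open>h1\<close> becomes tight.\<close>
  define t where "t = (b h1 - a h1 \<bullet> y) / (a h1 \<bullet> x - a h1 \<bullet> y)"
  define z where "z = (1 - t) *\<^sub>R y + t *\<^sub>R x"
  have t: "0 < t" "t < 1"
    using x_h1 y(2)[OF h1] by (auto simp: t_def field_simps)
  have "a h1 \<bullet> z = a h1 \<bullet> y + t * (a h1 \<bullet> x - a h1 \<bullet> y)"
    by (simp add: z_def inner_combination algebra_simps)
  then have z_h1: "a h1 \<bullet> z = b h1"
    using x_h1 y(2)[OF h1] by (simp add: t_def)
  have z_lt: "a h \<bullet> z < b h" if "h \<in> H - {h1}" for h
  proof -
    have "(1 - t) * (a h \<bullet> y) + t * (a h \<bullet> x) < (1 - t) * b h + t * b h"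
      using t y(2) x_h[OF that] that by (intro add_less_le_mono mult_strict_left_mono mult_left_mono) auto
    then show ?thesis
      by (simp add: z_def inner_combination algebra_simps)
  qed
  have "z \<in> affine hull P"
    unfolding z_def using x(1) hull_inc[OF y(1)] by (intro mem_affine affine_affine_hull) auto
  then have "z \<in> P"
    using z_h1 z_lt mem_iff by (metis Diff_iff empty_iff insert_iff order.refl less_imp_le)
  then have "z \<in> facet h1"
    using z_h1 by (simp add: facet_def)
  moreover have "z \<notin> facet h2"
    using z_lt[of h2] h2 \<open>h1 \<noteq> h2\<close> by (simp add: facet_def)
  ultimately show False
    using eq by simp
qed

lemma facets_through_eq: "v \<in> P \<Longrightarrow> {F. F facet_of P \<and> v \<in> F} = facet ` tight v"
  unfolding facet_of_iff tight_def facet_def by auto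

lemma card_facets_through:
  assumes "v \<in> P"
  shows "card {F. F facet_of P \<and> v \<in> F} = card (tight v)"
proof -
  have "inj_on facet (tight v)"
    using inj_on_facet by (rule inj_on_subset) (auto simp: tight_def)
  then show ?thesis
    using facets_through_eq[OF assms] card_image by simp
qed

lemma small_step_towards_mem:
  assumes v: "v \<in> P" and w: "w \<in> affine hull P" and w_tight: "\<And>h. h \<in> tight v \<Longrightarrow> a h \<bullet> w \<le> b h"
  obtains t where "0 < t" "(1 - t) *\<^sub>R v + t *\<^sub>R w \<in> P"
proof -
  let ?z = "\<lambda>t. (1 - t) *\<^sub>R v + t *\<^sub>R w"
  have "\<forall>\<^sub>F t in at_right 0. \<forall>h\<in>H - tight v. a h \<bullet> ?z t < b h"
  proof (intro eventually_ball_finite ballI)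
    show "finite (H - tight v)"
      using finite_H by simp
    fix h assume h: "h \<in> H - tight v"
    have "((\<lambda>t. (1 - t) * (a h \<bullet> v) + t * (a h \<bullet> w)) \<longlongrightarrow> (1 - 0) * (a h \<bullet> v) + 0 * (a h \<bullet> w)) (at_right 0)"
      by (intro tendsto_intros)
    moreover have "a h \<bullet> v < b h"
      using h v mem_iff by (force simp: tight_def)
    ultimately show "\<forall>\<^sub>F t in at_right 0. a h \<bullet> ?z t < b h"
      unfolding inner_combination by (auto dest: order_tendstoD(2))
  qed
  then obtain t where t: "0 < t" "\<forall>h\<in>H - tight v. a h \<bullet> ?z t < b h"
    using eventually_happens'[OF trivial_limit_at_right_real eventually_conj[OF eventually_at_right_less]]
    by blast
  have "a h \<bullet> ?z t \<le> b h" if "h \<in> tight v" for h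
  proof -
    have "(1 - t) * b h + t * (a h \<bullet> w) \<le> b h"
      using w_tight[OF that] \<open>0 < t\<close> by (simp add: algebra_simps mult_left_mono)
    then show ?thesis
      using that by (simp add: inner_combination tight_def)
  qed
  moreover have "?z t \<in> affine hull P"
    using hull_inc[OF v] w by (intro mem_affine affine_affine_hull) auto
  ultimately have "?z t \<in> P"
    using t(2) mem_iff by (metis Diff_iff less_imp_le)
  with t(1) show thesis
    by (rule that)
qed

lemma tight_hyperplanes_meet_at_vertex:
  assumes vertex: "{v} face_of P"
  shows "affine hull P \<inter> \<Inter>((\<lambda>h. {x. a h \<bullet> x = b h}) ` tight v) = {v}"
proof (cases "P = {v}")
  case True
  then show ?thesis
    by (auto simp: tight_def)
next
  case False
  have v: "v \<in> P"
    using vertex face_of_imp_subset by blast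
  have vertex_eq: "{v} = \<Inter>{F. F facet_of P \<and> {v} \<subseteq> F}"
    using face_of_polyhedron[OF polyhedron vertex] False by blast
  have "w = v" if w: "w \<in> affine hull P" "\<And>h. h \<in> tight v \<Longrightarrow> a h \<bullet> w = b h" for w
  proof -
    obtain t where t: "0 < t" "(1 - t) *\<^sub>R v + t *\<^sub>R w \<in> P"
      using small_step_towards_mem[OF v w(1)] w(2) by (metis order.refl)
    have "(1 - t) *\<^sub>R v + t *\<^sub>R w \<in> F" if "F facet_of P" "{v} \<subseteq> F" for F
    proof -
      obtain h where "h \<in> H" "F = facet h"
        using \<open>F facet_of P\<close> facet_of_iff by blast
      moreover have "h \<in> tight v"
        using calculation \<open>{v} \<subseteq> F\<close> by (simp add: facet_def tight_def)
      ultimately show ?thesis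
        using t(2) w(2) tight_def by (simp add: facet_def inner_combination algebra_simps)
    qed
    then have "(1 - t) *\<^sub>R v + t *\<^sub>R w = v"
      using vertex_eq by blast
    then have "t *\<^sub>R (w - v) = 0"
      by (simp add: algebra_simps)
    then show "w = v"
      using t(1) by simp
  qed
  moreover have "v \<in> affine hull P"
    using v by (rule hull_inc)
  ultimately show ?thesis
    by (auto simp: tight_def)
qed

lemma leave_one_tight_constraint:
  assumes vertex: "{v} face_of P" and h0: "h0 \<in> tight v"
    and few: "int (card (tight v)) \<le> aff_dim P"
  obtains z where "z \<in> P" "\<And>h. h \<in> tight v - {h0} \<Longrightarrow> a h \<bullet> z = b h" "a h0 \<bullet> z < b h0"
proof -
  have v: "v \<in> P"
    using vertex face_of_imp_subset by blast
  have finite_tight: "finite (tight v)"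
    using finite_H by (simp add: tight_def)
  define M where "M = affine hull P \<inter> \<Inter>((\<lambda>h. {x. a h \<bullet> x = b h}) ` (tight v - {h0}))"
  have M_affine: "affine M"
    unfolding M_def by (intro affine_Int affine_affine_hull affine_Inter) (auto intro: affine_hyperplane)
  have v_M: "v \<in> M"
    using hull_inc[OF v] by (auto simp: M_def tight_def)
  have "aff_dim P - int (card (tight v - {h0})) \<le> aff_dim M"
    unfolding M_def aff_dim_affine_hull[symmetric, of P]
    by (rule aff_dim_Int_hyperplanes_ge) (use finite_tight hull_inc[OF v] in \<open>auto simp: tight_def\<close>)
  moreover have "0 < card (tight v)"
    using h0 finite_tight card_gt_0_iff by blast
  ultimately have "1 \<le> aff_dim M"
    using few h0 finite_tight by (simp add: card_Diff_singleton of_nat_diff)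
  then have "M \<noteq> {v}"
    by auto
  then obtain w where w: "w \<in> M" "w \<noteq> v"
    using v_M by blast
  have "a h0 \<bullet> w \<noteq> b h0"
  proof
    assume "a h0 \<bullet> w = b h0"
    then have "w \<in> affine hull P \<inter> \<Inter>((\<lambda>h. {x. a h \<bullet> x = b h}) ` tight v)"
      using w(1) by (auto simp: M_def)
    with w(2) show False
      using tight_hyperplanes_meet_at_vertex[OF vertex] by blast
  qed
  \<comment> \<open>If \<open>w\<close> lies beyond \<open>h0\<close>, its reflection through \<open>v\<close> lies beneath it.\<close>
  obtain w' where w': "w' \<in> M" "a h0 \<bullet> w' < b h0"
  proof (cases "a h0 \<bullet> w < b h0")
    case True
    then show ?thesis
      using that w(1) by blast
  next
    case False
    have "(1 - 2) *\<^sub>R w + 2 *\<^sub>R v \<in> M"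
      using M_affine w(1) v_M by (rule mem_affine) simp
    moreover have "a h0 \<bullet> ((1 - 2) *\<^sub>R w + 2 *\<^sub>R v) < b h0"
      using False \<open>a h0 \<bullet> w \<noteq> b h0\<close> h0 by (simp add: inner_diff_right tight_def)
    ultimately show ?thesis
      using that by blast
  qed
  have "a h \<bullet> w' \<le> b h" if "h \<in> tight v" for h
    using that w' by (cases "h = h0") (auto simp: M_def)
  moreover have "w' \<in> affine hull P"
    using w'(1) by (simp add: M_def)
  ultimately obtain t where t: "0 < t" "(1 - t) *\<^sub>R v + t *\<^sub>R w' \<in> P"
    using small_step_towards_mem[OF v] by blast
  show thesis
  proof (rule that[OF t(2)])
    show "a h \<bullet> ((1 - t) *\<^sub>R v + t *\<^sub>R w') = b h" if "h \<in> tight v - {h0}" for h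
      using that w'(1) by (simp add: M_def tight_def inner_combination algebra_simps)
    have "t * (a h0 \<bullet> w') < t * b h0"
      using t(1) w'(2) by simp
    then show "a h0 \<bullet> ((1 - t) *\<^sub>R v + t *\<^sub>R w') < b h0"
      using h0 by (simp add: tight_def inner_combination algebra_simps)
  qed
qed

end

lemma polyhedron_minimal_halfspace_representation:
  assumes "polyhedron P"
  obtains H a b where "minimal_halfspace_representation P H a b"
proof -
  obtain H where H: "finite H" "P = affine hull P \<inter> \<Inter>H"
    "\<And>H'. H' \<subset> H \<Longrightarrow> P \<subset> affine hull P \<inter> \<Inter>H'"
    and "\<And>h. h \<in> H \<Longrightarrow> \<exists>a b. a \<noteq> 0 \<and> h = {x. a \<bullet> x \<le> b}"
    using assms by (simp add: polyhedron_Int_affine_minimal) meson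
  then obtain a b where "\<And>h. h \<in> H \<Longrightarrow> a h \<noteq> 0 \<and> h = {x. a h \<bullet> x \<le> b h}"
    by metis
  with H show thesis
    by (intro that minimal_halfspace_representation.intro)
qed

lemma facet_not_redundant_at_simple_vertex:
  fixes P :: "'a::euclidean_space set"
  assumes "polyhedron P" and vertex: "{v} face_of P"
    and simple: "int (card {F. F facet_of P \<and> v \<in> F}) \<le> aff_dim P"
    and G: "G facet_of P" "v \<in> G" and T: "T \<subseteq> {F. F facet_of P \<and> v \<in> F} - {G}"
  shows "\<not> P \<inter> \<Inter>T \<subseteq> G"
proof -
  obtain H a b where "minimal_halfspace_representation P H a b"
    using polyhedron_minimal_halfspace_representation[OF \<open>polyhedron P\<close>] by blast
  then interpret minimal_halfspace_representation P H a b .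
  have v: "v \<in> P"
    using vertex face_of_imp_subset by blast
  obtain h0 where h0: "h0 \<in> tight v" "G = facet h0"
    using G facets_through_eq[OF v] by blast
  have "int (card (tight v)) \<le> aff_dim P"
    using simple card_facets_through[OF v] by simp
  then obtain z where z: "z \<in> P" "\<And>h. h \<in> tight v - {h0} \<Longrightarrow> a h \<bullet> z = b h" "a h0 \<bullet> z < b h0"
    using leave_one_tight_constraint[OF vertex h0(1)] by blast
  have "z \<in> F" if "F \<in> T" for F
  proof -
    obtain h where "h \<in> tight v" "F = facet h"
      using \<open>F \<in> T\<close> T facets_through_eq[OF v] by blast
    moreover have "h \<noteq> h0"
      using calculation h0 \<open>F \<in> T\<close> T by blast
    ultimately show ?thesis
      using z(1,2) by (simp add: facet_def)
  qed
  moreover have "z \<notin> G"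
    using h0(2) z(3) by (simp add: facet_def)
  ultimately show ?thesis
    using z(1) by blast
qed

section \<open>Faces of simple polytopes\<close>

lemma face_join_face_of:
  assumes "convex P" "\<And>F. F \<in> S \<Longrightarrow> F face_of P"
  shows "face_join P S face_of P"
proof -
  have "\<Inter>(insert P S) face_of P"
    using assms face_of_refl by (intro face_of_Inter) auto
  then show ?thesis
    by (simp add: face_join_def)
qed

lemma face_of_polytope_contains_vertex:
  fixes P :: "'a::euclidean_space set"
  assumes "polytope P" "C face_of P" "C \<noteq> {}"
  obtains v where "{v} face_of P" "v \<in> C"
proof -
  have "compact C" "convex C"
    using assms face_of_imp_compact face_of_imp_convex polytope_imp_compact polytope_imp_convex
    by blast+
  then obtain x where "x extreme_point_of C"
    using extreme_point_exists_convex assms(3) by blast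
  then show thesis
    using that extreme_point_of_face[OF assms(2)] face_of_singleton by blast
qed

lemma face_eq_Int_facets:
  assumes "polyhedron P" "F face_of P" "F \<noteq> {}"
  shows "F = P \<inter> \<Inter>{G. G facet_of P \<and> F \<subseteq> G}"
proof (cases "F = P")
  case True
  have "\<not> (G facet_of P \<and> P \<subseteq> G)" for G
    using facet_of_irrefl facet_of_imp_subset by (metis subset_antisym)
  then have "{G. G facet_of P \<and> F \<subseteq> G} = {}"
    using True by blast
  then show ?thesis
    using True by (metis Inter_empty Int_UNIV_right)
next
  case False
  then show ?thesis
    using face_of_polyhedron[OF assms False] face_of_imp_subset[OF assms(2)] by blast
qed

lemma simple_polytope_facets_through_vertex:
  assumes "simple_polytope d P" "{v} face_of P"
  shows "polytope P" "card {F. F facet_of P \<and> v \<in> F} = d"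
    and "int (card {F. F facet_of P \<and> v \<in> F}) \<le> aff_dim P"
  using assms by (auto simp: simple_polytope_def)

lemma independent_facets_if_join_nonempty:
  assumes simple: "simple_polytope d P" and S: "\<And>F. F \<in> S \<Longrightarrow> F facet_of P"
    and ne: "face_join P S \<noteq> {}"
  shows "independent_facets P S"
proof -
  have P: "polytope P"
    using simple by (simp add: simple_polytope_def)
  have "face_join P S face_of P"
    using face_join_face_of polytope_imp_convex[OF P] S facet_of_imp_face_of by blast
  then obtain v where v: "{v} face_of P" "v \<in> face_join P S"
    using face_of_polytope_contains_vertex[OF P _ ne] by blast
  have "\<not> P \<inter> \<Inter>(S - {s}) \<subseteq> s" if "s \<in> S" for s
  proof (rule facet_not_redundant_at_simple_vertex[OF polytope_imp_polyhedron[OF P] v(1)])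
    show "int (card {F. F facet_of P \<and> v \<in> F}) \<le> aff_dim P"
      using simple_polytope_facets_through_vertex[OF simple v(1)] by blast
    show "s facet_of P" "v \<in> s" "S - {s} \<subseteq> {F. F facet_of P \<and> v \<in> F} - {s}"
      using S that v(2) by (auto simp: face_join_def)
  qed
  then show ?thesis
    using S by (auto simp: independent_facets_def face_join_def) blast
qed

lemma boolean_lattice_face_interval:
  assumes simple: "simple_polytope d P" and vertex: "{v} face_of P"
  shows "boolean_lattice_of_rank (face_interval P v) d"
proof -
  define Fv where "Fv = {F. F facet_of P \<and> v \<in> F}"
  define facets_above where "facets_above F = {G. G facet_of P \<and> F \<subseteq> G}" for F
  note P = simple_polytope_facets_through_vertex[OF simple vertex, folded Fv_def]
  have mem_interval: "F \<in> face_interval P v \<longleftrightarrow> F face_of P \<and> v \<in> F" for F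
    by (simp add: face_interval_def)
  have reverse_order: "G \<subseteq> F \<longleftrightarrow> facets_above F \<subseteq> facets_above G"
    if "F \<in> face_interval P v" "G \<in> face_interval P v" for F G
    using that face_eq_Int_facets[OF polytope_imp_polyhedron[OF P(1)], of F]
      face_eq_Int_facets[OF polytope_imp_polyhedron[OF P(1)], of G]
    unfolding mem_interval facets_above_def by blast
  have above_Fv: "facets_above F \<subseteq> Fv" if "F \<in> face_interval P v" for F
    using that by (auto simp: mem_interval facets_above_def Fv_def)
  have "bij_betw facets_above (face_interval P v) (Pow Fv)"
  proof (rule bij_betwI')
    show "facets_above F = facets_above G \<longleftrightarrow> F = G"
      if "F \<in> face_interval P v" "G \<in> face_interval P v" for F G
      using reverse_order[OF that] reverse_order[OF that(2,1)] by blast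
    show "facets_above F \<in> Pow Fv" if "F \<in> face_interval P v" for F
      using above_Fv[OF that] by blast
  next
    fix T assume "T \<in> Pow Fv"
    then have T: "T \<subseteq> Fv" by blast
    have "face_join P T face_of P"
      by (intro face_join_face_of polytope_imp_convex[OF P(1)] facet_of_imp_face_of)
        (use T in \<open>auto simp: Fv_def\<close>)
    moreover have v_T: "v \<in> face_join P T"
      using T vertex face_of_imp_subset by (auto simp: face_join_def Fv_def)
    moreover have "facets_above (face_join P T) = T"
    proof -
      have "\<not> P \<inter> \<Inter>T \<subseteq> G" if "G \<in> Fv - T" for G
        using facet_not_redundant_at_simple_vertex[OF polytope_imp_polyhedron[OF P(1)] vertex]
          P(3) T that by (auto simp: Fv_def)
      moreover have "v \<in> G" if "P \<inter> \<Inter>T \<subseteq> G" for G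
        using v_T that by (auto simp: face_join_def)
      ultimately show ?thesis
        using T by (auto simp: facets_above_def face_join_def Fv_def)
    qed
    ultimately show "\<exists>F\<in>face_interval P v. T = facets_above F"
      by (auto simp: mem_interval)
  qed
  moreover obtain g where g: "bij_betw g Fv {0..<d}"
    using ex_bij_betw_finite_nat finite_polytope_facets[OF P(1)] P(2)
    by (metis (no_types, lifting) Fv_def finite_subset mem_Collect_eq subsetI)
  ultimately have "bij_betw (image g \<circ> facets_above) (face_interval P v) (Pow {0..<d})"
    using bij_betw_trans bij_betw_Pow by blast
  moreover have "\<forall>F\<in>face_interval P v. \<forall>G\<in>face_interval P v.
      G \<subseteq> F \<longleftrightarrow> (image g \<circ> facets_above) F \<subseteq> (image g \<circ> facets_above) G"
    using reverse_order inj_on_image_subset_iff[OF bij_betw_imp_inj_on[OF g] above_Fv above_Fv]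
    by simp
  ultimately show ?thesis
    unfolding boolean_lattice_of_rank_def
    by (intro exI[of _ "{0..<d}"] exI[of _ "image g \<circ> facets_above"]) auto
qed

section \<open>Facets of convex hulls and maximizers\<close>

lemma finite_has_max_point:
  fixes f :: "'a \<Rightarrow> 'b::linorder"
  assumes "finite S" "S \<noteq> {}"
  obtains x where "x \<in> S" "\<And>y. y \<in> S \<Longrightarrow> f y \<le> f x"
proof -
  have "Max (f ` S) \<in> f ` S"
    using assms by simp
  then obtain x where "x \<in> S" "f x = Max (f ` S)"
    by (metis imageE)
  then show thesis
    using that assms by (metis Max_ge finite_imageI image_eqI)
qed

definition maximizers :: "'a::real_inner set \<Rightarrow> 'a \<Rightarrow> 'a set" where
  "maximizers V c = {p \<in> V. \<forall>q\<in>V. c \<bullet> q \<le> c \<bullet> p}"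

lemma maximizers_nonempty:
  assumes "finite V" "V \<noteq> {}"
  shows "maximizers V c \<noteq> {}"
proof -
  obtain p where "p \<in> V" "\<And>q. q \<in> V \<Longrightarrow> c \<bullet> q \<le> c \<bullet> p"
    using finite_has_max_point[OF assms] by blast
  then show ?thesis
    by (auto simp: maximizers_def)
qed

definition Helly2_maximizers :: "'a::real_inner set \<Rightarrow> bool" where
  "Helly2_maximizers V \<longleftrightarrow> (\<forall>C. finite C \<longrightarrow>
     (\<forall>c\<in>C. \<forall>c'\<in>C. maximizers V c \<inter> maximizers V c' \<noteq> {}) \<longrightarrow> \<Inter>(maximizers V ` C) \<noteq> {})"

lemma face_of_convex_hull_meets_points:
  fixes V :: "'a::euclidean_space set"
  assumes "finite V" "C face_of convex hull V" "C \<noteq> {}"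
  shows "C \<inter> V \<noteq> {}"
proof -
  obtain p where "{p} face_of convex hull V" "p \<in> C"
    using face_of_polytope_contains_vertex[OF polytope_convex_hull[OF assms(1)] assms(2,3)] by blast
  moreover from this(1) have "p \<in> V"
    using extreme_point_of_convex_hull face_of_singleton by blast
  ultimately show ?thesis
    by blast
qed

lemma facet_of_convex_hull_maximizers:
  fixes V :: "'a::euclidean_space set"
  assumes "finite V" "F facet_of convex hull V"
  obtains c where "F \<inter> V = maximizers V c"
proof -
  have "polyhedron (convex hull V)"
    using assms(1) polytope_convex_hull polytope_imp_polyhedron by blast
  then obtain c \<beta> where c: "convex hull V \<subseteq> {x. c \<bullet> x \<le> \<beta>}" "F = convex hull V \<inter> {x. c \<bullet> x = \<beta>}"
    using facet_of_polyhedron assms(2) by metis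
  have "F \<inter> V \<noteq> {}"
    using face_of_convex_hull_meets_points[OF assms(1)] assms(2) by (auto simp: facet_of_def)
  then obtain p where p: "p \<in> V" "c \<bullet> p = \<beta>"
    using c(2) by blast
  have "c \<bullet> q \<le> \<beta>" if "q \<in> V" for q
    using c(1) hull_inc[OF that] by blast
  then have "F \<inter> V = maximizers V c"
    using c(2) p hull_inc[of _ V] by (auto simp: maximizers_def intro: order.antisym)
  then show thesis
    by (rule that)
qed

lemma independent_facets_pairwise_meet:
  fixes V :: "'a::euclidean_space set"
  assumes "finite V" and indep: "independent_facets (convex hull V) S"
    and "3 \<le> card S" "F \<in> S" "G \<in> S"
  shows "F \<inter> G \<inter> V \<noteq> {}"
proof -
  have "card {F, G} \<le> 2"
    by (simp add: card_insert_if)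
  then have "\<not> S \<subseteq> {F, G}"
    using assms(3) card_mono[of "{F, G}" S] by fastforce
  then obtain s where s: "s \<in> S" "s \<notin> {F, G}"
    by blast
  have S: "\<And>F. F \<in> S \<Longrightarrow> F face_of convex hull V"
    using indep by (auto simp: independent_facets_def facet_of_imp_face_of)
  have "face_join (convex hull V) (S - {s}) \<noteq> {}"
    using indep s(1) by (auto simp: independent_facets_def)
  moreover have "face_join (convex hull V) (S - {s}) face_of convex hull V"
    using S by (intro face_join_face_of convex_convex_hull) auto
  ultimately have "face_join (convex hull V) (S - {s}) \<inter> V \<noteq> {}"
    using face_of_convex_hull_meets_points[OF assms(1)] by blast
  then show ?thesis
    using s assms(4,5) by (auto simp: face_join_def)
qed

lemma card_independent_facets_le_2:
  fixes V :: "'a::euclidean_space set"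
  assumes "finite V" "Helly2_maximizers V"
    and indep: "independent_facets (convex hull V) S" and empty: "face_join (convex hull V) S = {}"
  shows "card S \<le> 2"
proof (rule ccontr)
  assume "\<not> card S \<le> 2"
  then have three: "3 \<le> card S"
    by simp
  then have "finite S"
    using card.infinite by fastforce
  have "\<forall>F\<in>S. \<exists>c. F \<inter> V = maximizers V c"
    using facet_of_convex_hull_maximizers[OF assms(1)] indep
    by (metis independent_facets_def)
  then obtain c where c: "\<And>F. F \<in> S \<Longrightarrow> F \<inter> V = maximizers V (c F)"
    by metis
  have "maximizers V (c F) \<inter> maximizers V (c G) \<noteq> {}" if "F \<in> S" "G \<in> S" for F G
    using independent_facets_pairwise_meet[OF assms(1) indep three that] c[OF that(1)] c[OF that(2)]
    by blast
  then have "\<Inter>(maximizers V ` c ` S) \<noteq> {}"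
    using assms(2)[unfolded Helly2_maximizers_def, rule_format, of "c ` S"] \<open>finite S\<close> by blast
  then obtain p where "p \<in> \<Inter>(maximizers V ` c ` S)"
    by blast
  then have "p \<in> F" if "F \<in> S" for F
    using c[OF that] that by blast
  moreover obtain F0 where "F0 \<in> S"
    using three by fastforce
  then have "p \<in> convex hull V"
    using calculation indep facet_of_imp_subset by (auto simp: independent_facets_def)
  ultimately show False
    using empty by (auto simp: face_join_def)
qed

section \<open>The cube\<close>

lemma sum_axis_eq_vec: "(\<Sum>i\<in>UNIV. c i *\<^sub>R axis i 1) = ((\<chi> i. c i) :: real^'n)"
  by (simp add: vec_eq_iff axis_def if_distrib sum.If_cases cong del: if_weak_cong)

definition sign_vectors :: "(real^'n) set" where
  "sign_vectors = {x. \<forall>i. x $ i = 1 \<or> x $ i = -1}"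

lemma cube_eq_convex_hull_sign_vectors: "cube = convex hull sign_vectors"
  unfolding cube_def sign_vectors_def sum_axis_eq_vec
  by (rule arg_cong[where f = "(hull) convex"]) (auto intro!: exI[of _ "($) _"])

lemma finite_sign_vectors: "finite sign_vectors"
proof (rule finite_subset)
  show "sign_vectors \<subseteq> (\<lambda>\<epsilon>. \<chi> i. \<epsilon> i) ` (UNIV \<rightarrow>\<^sub>E {1, -1})"
  proof
    fix x :: "real^'n" assume "x \<in> sign_vectors"
    then have "(($) x) \<in> UNIV \<rightarrow>\<^sub>E {1, -1}"
      by (auto simp: sign_vectors_def)
    then show "x \<in> (\<lambda>\<epsilon>. \<chi> i. \<epsilon> i) ` (UNIV \<rightarrow>\<^sub>E {1, -1})"
      by (rule rev_image_eqI) simp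
  qed
  show "finite ((\<lambda>\<epsilon>. (\<chi> i. \<epsilon> i) :: real^'n) ` (UNIV \<rightarrow>\<^sub>E {1, -1}))"
    by (intro finite_imageI finite_PiE) auto
qed

lemma maximizers_sign_vectors:
  fixes c :: "real^'n"
  shows "x \<in> maximizers sign_vectors c \<longleftrightarrow> x \<in> sign_vectors \<and> (\<forall>i. c $ i * x $ i = \<bar>c $ i\<bar>)"
proof -
  have inner: "c \<bullet> y = (\<Sum>i\<in>UNIV. c $ i * y $ i)" for y
    by (simp add: inner_vec_def)
  have le: "c $ i * y $ i \<le> \<bar>c $ i\<bar>" if "y \<in> sign_vectors" for y i
  proof -
    have "y $ i = 1 \<or> y $ i = -1"
      using that by (simp add: sign_vectors_def)
    then show ?thesis
      by auto
  qed
  define s :: "real^'n" where "s = (\<chi> i. if 0 \<le> c $ i then 1 else -1)"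
  have "c $ i * s $ i = \<bar>c $ i\<bar>" for i
    by (simp add: s_def abs_if)
  then have s: "s \<in> sign_vectors" "c \<bullet> s = (\<Sum>i\<in>UNIV. \<bar>c $ i\<bar>)"
    by (simp_all add: s_def sign_vectors_def inner)
  have bound: "c \<bullet> y \<le> (\<Sum>i\<in>UNIV. \<bar>c $ i\<bar>)" if "y \<in> sign_vectors" for y
    unfolding inner using le[OF that] by (rule sum_mono)
  have "x \<in> maximizers sign_vectors c \<longleftrightarrow> x \<in> sign_vectors \<and> (\<Sum>i\<in>UNIV. \<bar>c $ i\<bar>) \<le> c \<bullet> x"
    using s bound by (auto simp: maximizers_def intro: order.trans)
  moreover have "(\<Sum>i\<in>UNIV. \<bar>c $ i\<bar>) \<le> c \<bullet> x \<longleftrightarrow> (\<forall>i. c $ i * x $ i = \<bar>c $ i\<bar>)"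
    if "x \<in> sign_vectors"
  proof -
    have "(\<Sum>i\<in>UNIV. \<bar>c $ i\<bar>) - c \<bullet> x = (\<Sum>i\<in>UNIV. \<bar>c $ i\<bar> - c $ i * x $ i)"
      by (simp add: inner sum_subtractf)
    moreover have "0 \<le> (\<Sum>i\<in>UNIV. \<bar>c $ i\<bar> - c $ i * x $ i)"
      using le[OF that] by (simp add: sum_nonneg)
    moreover have "(\<Sum>i\<in>UNIV. \<bar>c $ i\<bar> - c $ i * x $ i) = 0 \<longleftrightarrow> (\<forall>i. c $ i * x $ i = \<bar>c $ i\<bar>)"
      using le[OF that] by (subst sum_nonneg_eq_0_iff) auto
    ultimately show ?thesis
      by (smt (verit))
  qed
  ultimately show ?thesis
    by blast
qed

lemma Helly2_sign_vectors: "Helly2_maximizers (sign_vectors :: (real^'n) set)"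
  unfolding Helly2_maximizers_def
proof (intro allI impI)
  fix C :: "(real^'n) set"
  assume pairwise: "\<forall>c\<in>C. \<forall>c'\<in>C. maximizers sign_vectors c \<inter> maximizers sign_vectors c' \<noteq> {}"
  have no_conflict: "\<not> (0 < c $ i \<and> c' $ i < 0)" if "c \<in> C" "c' \<in> C" for c c' i
  proof -
    have "maximizers sign_vectors c \<inter> maximizers sign_vectors c' \<noteq> {}"
      using pairwise that by simp
    then obtain x where "x \<in> maximizers sign_vectors c" "x \<in> maximizers sign_vectors c'"
      by auto
    then have "x \<in> sign_vectors" "c $ i * x $ i = \<bar>c $ i\<bar>" "c' $ i * x $ i = \<bar>c' $ i\<bar>"
      unfolding maximizers_sign_vectors by blast+
    moreover from this(1) have "x $ i = 1 \<or> x $ i = -1"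
      by (simp add: sign_vectors_def)
    ultimately show ?thesis
      by auto
  qed
  define x :: "real^'n" where "x = (\<chi> i. if \<exists>c\<in>C. 0 < c $ i then 1 else -1)"
  have "x \<in> sign_vectors"
    by (simp add: sign_vectors_def x_def)
  have "x \<in> maximizers sign_vectors c" if "c \<in> C" for c
  proof -
    have "c $ i * x $ i = \<bar>c $ i\<bar>" for i
      using no_conflict[OF that] no_conflict[OF _ that] that by (force simp: x_def abs_if)
    with \<open>x \<in> sign_vectors\<close> show ?thesis
      by (simp add: maximizers_sign_vectors)
  qed
  then show "\<Inter>(maximizers sign_vectors ` C) \<noteq> {}"
    by blast
qed

section \<open>The permutohedron\<close>

lemma sum_transpose:
  fixes f :: "'n::finite \<Rightarrow> 'n \<Rightarrow> 'b::ab_group_add"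
  assumes "i \<noteq> j"
  shows "(\<Sum>k\<in>UNIV. f k (Transposition.transpose i j k))
       = (\<Sum>k\<in>UNIV. f k k) + (f i j + f j i - f i i - f j j)"
proof -
  have "(\<Sum>k\<in>UNIV. f k (Transposition.transpose i j k) - f k k)
      = (\<Sum>k\<in>{i, j}. f k (Transposition.transpose i j k) - f k k)"
    by (rule sum.mono_neutral_right) auto
  then show ?thesis
    using assms by (simp add: sum_subtractf algebra_simps)
qed

definition permutation_vector :: "('n \<Rightarrow> int) \<Rightarrow> ('n \<Rightarrow> 'n) \<Rightarrow> real^'n" where
  "permutation_vector m \<pi> = (\<chi> i. of_int (m (\<pi> i)))"

definition permutation_vectors :: "('n::finite \<Rightarrow> int) \<Rightarrow> (real^'n) set" where
  "permutation_vectors m = permutation_vector m ` {\<pi>. \<pi> permutes UNIV}"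

lemma permutohedron_eq_convex_hull: "permutohedron m = convex hull permutation_vectors m"
  unfolding permutohedron_def permutation_vectors_def permutation_vector_def sum_axis_eq_vec
  by (rule arg_cong[where f = "(hull) convex"]) auto

lemma finite_permutation_vectors: "finite (permutation_vectors m)"
  unfolding permutation_vectors_def using finite_permutations[of UNIV] by simp

lemma permutation_vectors_nonempty: "permutation_vectors m \<noteq> {}"
  unfolding permutation_vectors_def using permutes_id by blast

lemma inner_permutation_vector_transpose:
  assumes "i \<noteq> j"
  shows "c \<bullet> permutation_vector m (\<pi> \<circ> Transposition.transpose i j)
       = c \<bullet> permutation_vector m \<pi> + (c $ j - c $ i) * (of_int (m (\<pi> i)) - of_int (m (\<pi> j)))"
  unfolding permutation_vector_def inner_vec_def
  using sum_transpose[OF assms, of "\<lambda>k l. c $ k * of_int (m (\<pi> l))"]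
  by (simp add: algebra_simps)

lemma maximizer_permutation_vector_sorted:
  assumes "inj m" "\<pi> permutes UNIV"
    and max: "permutation_vector m \<pi> \<in> maximizers (permutation_vectors m) c" and "c $ i < c $ j"
  shows "m (\<pi> i) < m (\<pi> j)"
proof (rule ccontr)
  assume "\<not> m (\<pi> i) < m (\<pi> j)"
  moreover have "i \<noteq> j"
    using \<open>c $ i < c $ j\<close> by auto
  then have "m (\<pi> i) \<noteq> m (\<pi> j)"
    using assms(1,2) by (metis injD permutes_inj)
  ultimately have "m (\<pi> j) < m (\<pi> i)"
    by simp
  then have "c \<bullet> permutation_vector m \<pi> < c \<bullet> permutation_vector m (\<pi> \<circ> Transposition.transpose i j)"
    using \<open>c $ i < c $ j\<close> by (simp add: inner_permutation_vector_transpose[OF \<open>i \<noteq> j\<close>])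
  moreover have "permutation_vector m (\<pi> \<circ> Transposition.transpose i j) \<in> permutation_vectors m"
    using assms(2) by (auto simp: permutation_vectors_def intro: permutes_compose permutes_swap_id)
  ultimately show False
    using max by (force simp: maximizers_def)
qed

lemma inj_on_card_less:
  fixes R :: "'a::linorder set"
  assumes "finite R"
  shows "inj_on (\<lambda>r. card {r'\<in>R. r' < r}) R"
proof -
  have less: "card {r'\<in>R. r' < r} < card {r'\<in>R. r' < s}" if "r \<in> R" "r < s" for r s
    using that assms by (intro psubset_card_mono) auto
  show ?thesis
  proof (rule inj_onI)
    fix r s assume "r \<in> R" "s \<in> R" "card {r'\<in>R. r' < r} = card {r'\<in>R. r' < s}"
    then show "r = s"
      using less[of r s] less[of s r] by (cases r s rule: linorder_cases) auto
  qed
qed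

lemma eq_if_same_order:
  fixes x y :: "'n::finite \<Rightarrow> 'b::linorder"
  assumes "inj x" "inj y" "range x = range y" and order: "\<And>i j. x i < x j \<Longrightarrow> y i < y j"
  shows "x = y"
proof
  fix i
  have order': "x j < x i" if "y j < y i" for j
  proof (rule ccontr)
    assume "\<not> x j < x i"
    then consider "x i = x j" | "x i < x j"
      by fastforce
    then show False
    proof cases
      case 1
      then show False
        using \<open>inj x\<close> that by (auto dest: injD)
    next
      case 2
      then show False
        using order that by fastforce
    qed
  qed
  have card_below: "card {r\<in>range z. r < z i} = card {j. z j < z i}" if "inj z" for z :: "'n \<Rightarrow> 'b"
  proof -
    have "{r\<in>range z. r < z i} = z ` {j. z j < z i}"
      by auto
    then show ?thesis
      using that by (simp add: card_image inj_on_subset)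
  qed
  have "{j. y j < y i} = {j. x j < x i}"
    using order order' by auto
  then have "card {r\<in>range x. r < x i} = card {r\<in>range x. r < y i}"
    using card_below[OF assms(1)] card_below[OF assms(2)] assms(3) by simp
  moreover have "inj_on (\<lambda>r. card {r'\<in>range x. r' < r}) (range x)"
    by (rule inj_on_card_less) simp
  moreover have "x i \<in> range x" "y i \<in> range x"
    using assms(3) by auto
  ultimately show "x i = y i"
    by (auto dest: inj_onD)
qed

lemma sorted_permutation_vector_maximizer:
  assumes "inj m" "\<pi> permutes UNIV" and sorted: "\<And>i j. c $ i < c $ j \<Longrightarrow> m (\<pi> i) < m (\<pi> j)"
  shows "permutation_vector m \<pi> \<in> maximizers (permutation_vectors m) c"
proof -
  define Q where "Q = {\<rho>. \<rho> permutes UNIV \<and> permutation_vector m \<rho> \<in> maximizers (permutation_vectors m) c}"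
  define agreement where "agreement \<rho> = (\<Sum>k\<in>UNIV. m (\<rho> k) * m (\<pi> k))" for \<rho>
  have "finite Q"
    unfolding Q_def using finite_permutations[of UNIV] by simp
  moreover have "Q \<noteq> {}"
    using maximizers_nonempty[OF finite_permutation_vectors permutation_vectors_nonempty, of m c]
    by (auto simp: Q_def maximizers_def permutation_vectors_def)
  \<comment> \<open>Among the maximizers, take one that agrees best with the order of \<open>\<pi>\<close>.\<close>
  ultimately obtain \<rho> where \<rho>: "\<rho> \<in> Q" and \<rho>_best: "\<And>\<rho>'. \<rho>' \<in> Q \<Longrightarrow> agreement \<rho>' \<le> agreement \<rho>"
    using finite_has_max_point[of Q agreement] by blast
  have \<rho>_perm: "\<rho> permutes UNIV"
    using \<rho> by (simp add: Q_def)
  have "m (\<rho> i) < m (\<rho> j)" if "m (\<pi> i) < m (\<pi> j)" for i j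
  proof (rule ccontr)
    assume "\<not> m (\<rho> i) < m (\<rho> j)"
    moreover have "i \<noteq> j"
      using that by auto
    then have "m (\<rho> i) \<noteq> m (\<rho> j)"
      using assms(1) \<rho>_perm by (metis injD permutes_inj)
    ultimately have inv: "m (\<rho> j) < m (\<rho> i)"
      by simp
    have "c $ i \<le> c $ j"
      using sorted[of j i] that by force
    then have "c \<bullet> permutation_vector m \<rho> \<le> c \<bullet> permutation_vector m (\<rho> \<circ> Transposition.transpose i j)"
      using inv by (simp add: inner_permutation_vector_transpose[OF \<open>i \<noteq> j\<close>])
    moreover have "permutation_vector m (\<rho> \<circ> Transposition.transpose i j) \<in> permutation_vectors m"
      "\<rho> \<circ> Transposition.transpose i j permutes UNIV"
      using \<rho>_perm by (auto simp: permutation_vectors_def intro: permutes_compose permutes_swap_id)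
    ultimately have "\<rho> \<circ> Transposition.transpose i j \<in> Q"
      using \<rho> by (auto simp: Q_def maximizers_def intro: order.trans)
    moreover have "agreement (\<rho> \<circ> Transposition.transpose i j)
        = agreement \<rho> + (m (\<rho> i) - m (\<rho> j)) * (m (\<pi> j) - m (\<pi> i))"
      using sum_transpose[OF \<open>i \<noteq> j\<close>, of "\<lambda>k l. m (\<rho> l) * m (\<pi> k)"]
      by (simp add: agreement_def algebra_simps)
    moreover have "0 < (m (\<rho> i) - m (\<rho> j)) * (m (\<pi> j) - m (\<pi> i))"
      using inv that by simp
    ultimately show False
      using \<rho>_best[of "\<rho> \<circ> Transposition.transpose i j"] by linarith
  qed
  moreover have "range (m \<circ> \<sigma>) = range m" if "\<sigma> permutes UNIV" for \<sigma>
    using that by (metis image_comp permutes_image)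
  ultimately have "m \<circ> \<pi> = m \<circ> \<rho>"
    using assms(1,2) \<rho>_perm by (intro eq_if_same_order) (auto intro: inj_compose permutes_inj)
  then have "permutation_vector m \<pi> = permutation_vector m \<rho>"
    by (simp add: permutation_vector_def fun_eq_iff)
  then show ?thesis
    using \<rho> by (simp add: Q_def)
qed

lemma Helly2_permutation_vectors:
  fixes m :: "'n::finite \<Rightarrow> int"
  assumes "inj m"
  shows "Helly2_maximizers (permutation_vectors m)"
  unfolding Helly2_maximizers_def
proof (intro allI impI)
  fix C :: "(real^'n) set"
  assume "finite C" and pairwise: "\<forall>c\<in>C. \<forall>c'\<in>C. maximizers (permutation_vectors m) c \<inter> maximizers (permutation_vectors m) c' \<noteq> {}"
  have no_conflict: "c' $ i \<le> c' $ j" if "c \<in> C" "c' \<in> C" "c $ i < c $ j" for c c' i j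
  proof (rule ccontr)
    assume "\<not> c' $ i \<le> c' $ j"
    have "maximizers (permutation_vectors m) c \<inter> maximizers (permutation_vectors m) c' \<noteq> {}"
      using pairwise that(1,2) by simp
    then obtain \<pi> where "\<pi> permutes UNIV"
      "permutation_vector m \<pi> \<in> maximizers (permutation_vectors m) c"
      "permutation_vector m \<pi> \<in> maximizers (permutation_vectors m) c'"
      by (auto simp: maximizers_def permutation_vectors_def)
    then have "m (\<pi> i) < m (\<pi> j)" "m (\<pi> j) < m (\<pi> i)"
      using maximizer_permutation_vector_sorted[OF assms] that(3) \<open>\<not> c' $ i \<le> c' $ j\<close> by force+
    then show False
      by simp
  qed
  \<comment> \<open>A maximizer of the sum of all functionals in \<open>C\<close> is sorted compatibly with each of them.\<close>
  obtain \<sigma> where \<sigma>: "\<sigma> permutes UNIV" "permutation_vector m \<sigma> \<in> maximizers (permutation_vectors m) (\<Sum>C)"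
    using maximizers_nonempty[OF finite_permutation_vectors permutation_vectors_nonempty, of m "\<Sum>C"]
    by (auto simp: maximizers_def permutation_vectors_def)
  have "permutation_vector m \<sigma> \<in> maximizers (permutation_vectors m) c" if "c \<in> C" for c
  proof (rule sorted_permutation_vector_maximizer[OF assms \<sigma>(1)])
    fix i j assume "c $ i < c $ j"
    then have "(\<Sum>C) $ i < (\<Sum>C) $ j"
      unfolding sum_component using \<open>finite C\<close> that no_conflict[OF that]
      by (intro sum_strict_mono_ex1) auto
    then show "m (\<sigma> i) < m (\<sigma> j)"
      by (rule maximizer_permutation_vector_sorted[OF assms \<sigma>])
  qed
  then show "\<Inter>(maximizers (permutation_vectors m) ` C) \<noteq> {}"
    by blast
qed

theorem proposition3:
  shows "(\<forall>(P::'a::euclidean_space set) d v.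
            simple_polytope d P \<and> {v} face_of P \<longrightarrow>
              boolean_lattice_of_rank (face_interval P v) d)
       \<and> (\<forall>(P::'a set) d S.
            simple_polytope d P \<and> (\<forall>F\<in>S. F facet_of P) \<and> face_join P S \<noteq> {} \<longrightarrow>
              independent_facets P S)
       \<and> (\<forall>S. independent_facets (cube :: (real^'n) set) S \<and> face_join cube S = {} \<longrightarrow>
              card S \<le> 2)
       \<and> (\<forall>(m :: 'm::finite \<Rightarrow> int) S. inj m \<and> (\<forall>i. 0 \<le> m i) \<and>
            independent_facets (permutohedron m) S \<and> face_join (permutohedron m) S = {} \<longrightarrow>
              card S \<le> 2)"
proof (intro conjI allI impI)
  fix P :: "'a set" and d v
  assume "simple_polytope d P \<and> {v} face_of P"
  then show "boolean_lattice_of_rank (face_interval P v) d"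
    using boolean_lattice_face_interval by blast
next
  fix P :: "'a set" and d S
  assume "simple_polytope d P \<and> (\<forall>F\<in>S. F facet_of P) \<and> face_join P S \<noteq> {}"
  then show "independent_facets P S"
    using independent_facets_if_join_nonempty by blast
next
  fix S
  assume "independent_facets (cube :: (real^'n) set) S \<and> face_join cube S = {}"
  then show "card S \<le> 2"
    unfolding cube_eq_convex_hull_sign_vectors
    using card_independent_facets_le_2[OF finite_sign_vectors Helly2_sign_vectors] by blast
next
  fix m :: "'m \<Rightarrow> int" and S
  assume "inj m \<and> (\<forall>i. 0 \<le> m i) \<and> independent_facets (permutohedron m) S
    \<and> face_join (permutohedron m) S = {}"
  then show "card S \<le> 2"
    unfolding permutohedron_eq_convex_hull
    using card_independent_facets_le_2[OF finite_permutation_vectors Helly2_permutation_vectors]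
    by blast
qed

end
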